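(* Let $\mathcal{H}$ be a real Hilbert space, let $A\colon \mathcal{H}\rightrightarrows\mathcal{H}$ be maximally monotone, let $B\colon \mathcal{H}\to\mathcal{H}$ be monotone and $L_1$-Lipschitz, and let $C\colon \mathcal{H}\to\mathcal{H}$ be $1/L_2$-cocoercive. Let $x\in(A+B+C)^{-1}(0)$, let $\lambda \in \left(0,\frac{2}{4L_1+L_2} \right)$, and given $x_0,x_{-1}\in\mathcal{H}$ let $$x_{k+1} = J_{\lambda A}\bigl(x_k - 2\lambda B(x_k) + \lambda B(x_{k-1}) - \lambda C(x_k) \bigr) \quad\forall k\in\mathbb{N}.$$ Then there exists $\varepsilon>0$ such that, for all $k\in\mathbb{N}$, $$\|x_{k+1}-x\|^2 + 2\lambda\langle B(x_{k+1})-B(x_k),x-x_{k+1}\rangle + \left(\lambda L_1+\varepsilon \right)\|x_{k+1}-x_k\|^2 \leq \|x_k-x\|^2 + 2\lambda\langle B(x_k)-B(x_{k-1}),x-x_{k}\rangle + \lambda L_1\|x_k-x_{k-1}\|^2.$$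
   Context: $J_{\lambda A}:=(I+\lambda A)^{-1}$ is the resolvent. $C$ is $1/L_2$-cocoercive if $\langle x-y,C(x)-C(y)\rangle\geq\frac{1}{L_2}\|C(x)-C(y)\|^2$ for all $x,y$. *)

theory Defs
  imports "HOL-Analysis.Analysis"
begin

definition monotone_op :: "('a::real_inner \<Rightarrow> 'a set) \<Rightarrow> bool" where
  "monotone_op A \<longleftrightarrow>
     (\<forall>x y u v. u \<in> A x \<longrightarrow> v \<in> A y \<longrightarrow> inner (x - y) (u - v) \<ge> 0)"

definition maximal_monotone :: "('a::real_inner \<Rightarrow> 'a set) \<Rightarrow> bool" where
  "maximal_monotone A \<longleftrightarrow> monotone_op A \<and>
     (\<forall>A'. monotone_op A' \<and> (\<forall>x. A x \<subseteq> A' x) \<longrightarrow> A' = A)"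

definition monotone_fun :: "('a::real_inner \<Rightarrow> 'a) \<Rightarrow> bool" where
  "monotone_fun B \<longleftrightarrow> (\<forall>x y. inner (x - y) (B x - B y) \<ge> 0)"

definition cocoercive :: "real \<Rightarrow> ('a::real_inner \<Rightarrow> 'a) \<Rightarrow> bool" where
  "cocoercive c C \<longleftrightarrow> (\<forall>x y. inner (x - y) (C x - C y) \<ge> c * (norm (C x - C y))\<^sup>2)"

text \<open>Resolvent J_{lam A} = (I + lam A)^{-1}, as a set-valued map:
  p \<in> J y iff y \<in> p + lam A(p).\<close>
definition resolvent :: "real \<Rightarrow> ('a::real_vector \<Rightarrow> 'a set) \<Rightarrow> 'a \<Rightarrow> 'a set" where
  "resolvent lam A y = {p. \<exists>a \<in> A p. y = p + lam *\<^sub>R a}"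

end

theory Submission
  imports Defs
begin

text \<open>Let p be the new iterate, q and r the two previous ones. Test the monotonicity of A at p
  against the zero x of A + B + C and multiply by \<open>lam\<close>: the term \<open>\<langle>p - x, q - p\<rangle>\<close> yields the
  three squared distances, the monotone part of B is dropped, the reflection term \<open>B q - B r\<close>
  splits into the telescoping inner product and a Lipschitz remainder bounded by Young's
  inequality, and cocoercivity absorbs the forward step in C at the price of
  \<open>lam L2 / 4 \<parallel>p - q\<parallel>\<^sup>2\<close>. What remains is the factor \<open>1 - 2 lam L1 - lam L2 / 2\<close>, positive
  exactly for \<open>lam < 2 / (4 L1 + L2)\<close>.\<close>

lemma mult_le_weighted_squares:
  fixes a b c :: real
  assumes "c > 0"
  shows "a * b \<le> c / 4 * a\<^sup>2 + b\<^sup>2 / c"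
proof -
  have "0 \<le> (c * a - 2 * b)\<^sup>2 / (4 * c)"
    using assms by simp
  also have "\<dots> = c / 4 * a\<^sup>2 + b\<^sup>2 / c - a * b"
    using assms by (simp add: field_simps power2_eq_square)
  finally show ?thesis by simp
qed

lemma lipschitz_inner_le:
  assumes "L-lipschitz_on UNIV B"
  shows "inner (B q - B r) (q - p) \<le> L / 2 * ((norm (q - r))\<^sup>2 + (norm (q - p))\<^sup>2)"
proof -
  have "L \<ge> 0" and lip: "norm (B q - B r) \<le> L * norm (q - r)"
    using assms by (auto simp: lipschitz_on_def dist_norm)
  have "inner (B q - B r) (q - p) \<le> norm (B q - B r) * norm (q - p)"
    by (rule norm_cauchy_schwarz)
  also have "\<dots> \<le> L * (norm (q - r) * norm (q - p))"
    using mult_right_mono[OF lip norm_ge_zero] by (simp add: mult.assoc)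
  also have "\<dots> \<le> L * (((norm (q - r))\<^sup>2 + (norm (q - p))\<^sup>2) / 2)"
    using \<open>L \<ge> 0\<close> sum_squares_bound[of "norm (q - r)" "norm (q - p)"]
    by (intro mult_left_mono) auto
  finally show ?thesis by simp
qed

lemma cocoercive_three_point:
  assumes "L > 0" and "cocoercive (1 / L) C"
  shows "inner (x - p) (C q - C x) \<le> L / 4 * (norm (q - p))\<^sup>2"
proof -
  have coco: "inner (q - x) (C q - C x) \<ge> (norm (C q - C x))\<^sup>2 / L"
    using assms(2) by (simp add: cocoercive_def)
  have "inner (q - p) (C q - C x) \<le> norm (q - p) * norm (C q - C x)"
    by (rule norm_cauchy_schwarz)
  also have "\<dots> \<le> L / 4 * (norm (q - p))\<^sup>2 + (norm (C q - C x))\<^sup>2 / L"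
    using assms(1) by (rule mult_le_weighted_squares)
  finally have "inner (q - p) (C q - C x) \<le> L / 4 * (norm (q - p))\<^sup>2 + (norm (C q - C x))\<^sup>2 / L" .
  moreover have "inner (x - p) (C q - C x) = inner (q - p) (C q - C x) - inner (q - x) (C q - C x)"
    by (simp add: inner_diff_left)
  ultimately show ?thesis
    using coco by linarith
qed

lemma resolvent_step_energy:
  fixes A :: "'a::real_inner \<Rightarrow> 'a set"
  assumes A_mono: "monotone_op A"
    and B_mono: "monotone_fun B"
    and B_lip: "L1-lipschitz_on UNIV B"
    and L2_pos: "L2 > 0"
    and C_coco: "cocoercive (1 / L2) C"
    and x_A: "a0 \<in> A x" and x_zero: "a0 + B x + C x = 0"
    and lam_pos: "lam > 0"
    and p_step: "p \<in> resolvent lam A (q - (2 * lam) *\<^sub>R B q + lam *\<^sub>R B r - lam *\<^sub>R C q)"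
  shows "(norm (p - x))\<^sup>2 + 2 * lam * inner (B p - B q) (x - p)
      + (1 - lam * L1 - lam * L2 / 2) * (norm (p - q))\<^sup>2
    \<le> (norm (q - x))\<^sup>2 + 2 * lam * inner (B q - B r) (x - q) + lam * L1 * (norm (q - r))\<^sup>2"
proof -
  obtain a1 where p_A: "a1 \<in> A p"
    and a1: "q - (2 * lam) *\<^sub>R B q + lam *\<^sub>R B r - lam *\<^sub>R C q = p + lam *\<^sub>R a1"
    using p_step by (auto simp: resolvent_def)
  have step_eq: "lam *\<^sub>R (a1 - a0) = (q - p) - lam *\<^sub>R (B p - B x) + lam *\<^sub>R (B p - B q)
      - lam *\<^sub>R (B q - B r) - lam *\<^sub>R (C q - C x)"
  proof -
    have a0: "a0 = - B x - C x"
      using x_zero by (simp add: eq_neg_iff_add_eq_0 algebra_simps)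
    have "lam *\<^sub>R a1 = q - (2 * lam) *\<^sub>R B q + lam *\<^sub>R B r - lam *\<^sub>R C q - p"
      using a1 by (simp add: algebra_simps)
    then show ?thesis
      unfolding a0 by (simp add: algebra_simps scaleR_2 flip: scaleR_scaleR)
  qed
  then have "lam * inner (p - x) (a1 - a0) = inner (p - x) (q - p) - lam * inner (p - x) (B p - B x)
      - lam * inner (B p - B q) (x - p) + lam * inner (B q - B r) (x - q)
      + lam * inner (B q - B r) (q - p) - lam * inner (p - x) (C q - C x)"
    using arg_cong[OF step_eq, of "inner (p - x)"]
    by (simp add: inner_diff_left inner_diff_right inner_commute algebra_simps)
  moreover have "lam * inner (p - x) (a1 - a0) \<ge> 0"
    using A_mono p_A x_A lam_pos by (simp add: monotone_op_def)
  moreover have "2 * inner (p - x) (q - p) = (norm (q - x))\<^sup>2 - (norm (p - x))\<^sup>2 - (norm (p - q))\<^sup>2"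
    using dot_norm[of "p - x" "q - p"] by (simp add: norm_minus_commute)
  moreover have "lam * inner (p - x) (B p - B x) \<ge> 0"
    using B_mono lam_pos by (simp add: monotone_fun_def)
  moreover have "lam * inner (B q - B r) (q - p) \<le> lam * (L1 / 2 * ((norm (q - r))\<^sup>2 + (norm (p - q))\<^sup>2))"
    using lipschitz_inner_le[OF B_lip, of q r p] lam_pos by (simp add: norm_minus_commute)
  moreover have "lam * inner (x - p) (C q - C x) \<le> lam * (L2 / 4 * (norm (p - q))\<^sup>2)"
    using cocoercive_three_point[OF L2_pos C_coco, of x p q] lam_pos by (simp add: norm_minus_commute)
  moreover have "inner (x - p) (C q - C x) = - inner (p - x) (C q - C x)"
    by (simp add: inner_diff_left)
  ultimately show ?thesis
    by (simp add: algebra_simps)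
qed

theorem lemma5p1:
  fixes A :: "'a::{real_inner, complete_space} \<Rightarrow> 'a set"
    and B C :: "'a \<Rightarrow> 'a"
    and L1 L2 lam :: real
    and xs :: "int \<Rightarrow> 'a"
    and x :: 'a
  assumes A_mm: "maximal_monotone A"
    and B_mono: "monotone_fun B"
    and B_lip: "L1-lipschitz_on UNIV B"
    and L2_pos: "L2 > 0"
    and C_coco: "cocoercive (1 / L2) C"
    and x_zero: "\<exists>a \<in> A x. a + B x + C x = 0"
    and lam_pos: "0 < lam"
    and lam_bd: "lam < 2 / (4 * L1 + L2)"
    and iter: "\<And>k. k \<ge> 0 \<Longrightarrow>
      xs (k + 1) \<in> resolvent lam A
        (xs k - (2 * lam) *\<^sub>R B (xs k) + lam *\<^sub>R B (xs (k - 1)) - lam *\<^sub>R C (xs k))"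
  shows "\<exists>\<epsilon>>0. \<forall>k\<ge>0.
    (norm (xs (k + 1) - x))\<^sup>2
      + 2 * lam * inner (B (xs (k + 1)) - B (xs k)) (x - xs (k + 1))
      + (lam * L1 + \<epsilon>) * (norm (xs (k + 1) - xs k))\<^sup>2
    \<le> (norm (xs k - x))\<^sup>2
      + 2 * lam * inner (B (xs k) - B (xs (k - 1))) (x - xs k)
      + lam * L1 * (norm (xs k - xs (k - 1)))\<^sup>2"
proof -
  let ?\<epsilon> = "1 - 2 * lam * L1 - lam * L2 / 2"
  have "L1 \<ge> 0"
    using B_lip by (simp add: lipschitz_on_def)
  then have "lam * (4 * L1 + L2) < 2"
    using lam_bd L2_pos by (simp add: field_simps)
  then have "?\<epsilon> > 0"
    by (simp add: algebra_simps)
  moreover obtain a0 where "a0 \<in> A x" "a0 + B x + C x = 0"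
    using x_zero by blast
  moreover have "monotone_op A"
    using A_mm by (simp add: maximal_monotone_def)
  ultimately show ?thesis
    using resolvent_step_energy[OF _ B_mono B_lip L2_pos C_coco _ _ lam_pos iter]
    by (intro exI[of _ ?\<epsilon>]) (auto simp: algebra_simps)
qed

end
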